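(* For $n\ge 3$, the cycle $C_n$ satisfies $\nu_*(C_n)=6n-4$.
   Context: For a finite simple graph $G=(V,E)$ with $\ell=|V|+|E|$, a construction sequence (c-sequence) is a bijection $x:\{1,\dots,\ell\}\to V\sqcup E$ such that every edge $e=uw$ satisfies $x^{-1}(e)>\max\{x^{-1}(u),x^{-1}(w)\}$. The cost of $x$ is $\nu(x)=\sum_{e=uw\in E}\big(2x^{-1}(e)-x^{-1}(u)-x^{-1}(w)\big)$, and $\nu_*(G)$ is the minimum of $\nu(x)$ over all c-sequences for $G$. $C_n$ is the cycle on $n$ vertices. *)

theory Defs
  imports Main
begin

definition simple_graph :: "'a set \<Rightarrow> 'a set set \<Rightarrow> bool" where
  "simple_graph V E \<longleftrightarrow> finite V \<and> (\<forall>e\<in>E. e \<subseteq> V \<and> card e = 2)"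

definition elems :: "'a set \<Rightarrow> 'a set set \<Rightarrow> ('a + 'a set) set" where
  "elems V E = V <+> E"

definition pos :: "'a set \<Rightarrow> 'a set set \<Rightarrow> (nat \<Rightarrow> 'a + 'a set) \<Rightarrow> ('a + 'a set) \<Rightarrow> nat" where
  "pos V E x z = inv_into {1..card V + card E} x z"

definition c_sequence :: "'a set \<Rightarrow> 'a set set \<Rightarrow> (nat \<Rightarrow> 'a + 'a set) \<Rightarrow> bool" where
  "c_sequence V E x \<longleftrightarrow>
     bij_betw x {1..card V + card E} (elems V E) \<and>
     (\<forall>e\<in>E. \<forall>u\<in>e. pos V E x (Inr e) > pos V E x (Inl u))"

text \<open>Cost: for e = uw, 2 x^{-1}(e) - x^{-1}(u) - x^{-1}(w) = sum over endpoints of (x^{-1}(e) - x^{-1}(v)).\<close>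
definition cost :: "'a set \<Rightarrow> 'a set set \<Rightarrow> (nat \<Rightarrow> 'a + 'a set) \<Rightarrow> int" where
  "cost V E x = (\<Sum>e\<in>E. \<Sum>u\<in>e. int (pos V E x (Inr e)) - int (pos V E x (Inl u)))"

definition nu_star :: "'a set \<Rightarrow> 'a set set \<Rightarrow> int" where
  "nu_star V E = Min {cost V E x | x. c_sequence V E x}"

definition cycle_V :: "nat \<Rightarrow> nat set" where
  "cycle_V n = {0..<n}"

definition cycle_E :: "nat \<Rightarrow> nat set set" where
  "cycle_E n = {{i, (i + 1) mod n} | i. i < n}"

end

theory Submission
  imports Defs
begin

(* Let a_t and b_t be the numbers of vertices and of edges among the first t elements of a
   c-sequence. Writing each position as the number of times before it (layer-cake formula), and
   using that the cycle has n vertices, n edges and every vertex on two edges, the cost becomes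
   2 * (sum over t < 2n of a_t - b_t). For 0 < t < 2n the placed edges lie inside the set of placed
   vertices, a proper nonempty part of the cycle, which spans fewer edges than vertices; so
   a_t > b_t, and as a_t + b_t = t even a_t - b_t >= 2 for even t. Summing gives the lower bound
   2 (n + 2 (n - 1)) = 6n - 4. It is attained by placing the vertices in cyclic order, each edge
   right after its later endpoint and the closing edge last. *)

lemma c_sequence_pos_bij:
  "c_sequence V E x \<Longrightarrow> bij_betw (pos V E x) (elems V E) {1..card V + card E}"
  unfolding c_sequence_def pos_def by (auto intro: bij_betw_inv_into)

lemma c_sequence_pos_le:
  assumes "c_sequence V E x" "z \<in> elems V E"
  shows "pos V E x z \<le> card V + card E"
  using bij_betwE[OF c_sequence_pos_bij[OF assms(1)]] assms(2) by auto

lemma c_sequence_finite: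
  assumes "c_sequence V E x"
  shows "finite V" "finite E"
proof -
  have "finite (V <+> E)"
    using assms bij_betw_finite by (fastforce simp: c_sequence_def elems_def)
  then show "finite V" "finite E" by auto
qed

lemma cost_bounds:
  assumes "c_sequence V E x"
  shows "0 \<le> cost V E x" "cost V E x \<le> (\<Sum>e\<in>E. \<Sum>u\<in>e. int (card V + card E))"
proof -
  have "pos V E x (Inl u) < pos V E x (Inr e)" if "e \<in> E" "u \<in> e" for e u
    using assms that by (simp add: c_sequence_def)
  then show "0 \<le> cost V E x"
    unfolding cost_def by (intro sum_nonneg) (simp add: less_imp_le)
  have "int (pos V E x (Inr e)) \<le> int (card V + card E)" if "e \<in> E" for e
    using c_sequence_pos_le[OF assms, unfolded elems_def, OF InrI[OF that]] by simp
  then show "cost V E x \<le> (\<Sum>e\<in>E. \<Sum>u\<in>e. int (card V + card E))"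
    unfolding cost_def by (intro sum_mono) (smt (verit) of_nat_0_le_iff)
qed

lemma nu_star_eqI:
  assumes "\<And>x. c_sequence V E x \<Longrightarrow> c \<le> cost V E x"
    and "c_sequence V E x\<^sub>0" "cost V E x\<^sub>0 = c"
  shows "nu_star V E = c"
  unfolding nu_star_def
proof (rule Min_eqI)
  let ?bound = "\<Sum>e\<in>E. \<Sum>u\<in>e. int (card V + card E)"
  have "{cost V E x | x. c_sequence V E x} \<subseteq> {0..?bound}"
    using cost_bounds by fastforce
  then show "finite {cost V E x | x. c_sequence V E x}"
    by (rule finite_subset) simp
qed (use assms in auto)

lemma cost_eq_sum_edges_minus_sum_endpoints:
  assumes "\<And>e. e \<in> E \<Longrightarrow> card e = 2"
  shows "cost V E x = 2 * (\<Sum>e\<in>E. int (pos V E x (Inr e))) - (\<Sum>e\<in>E. \<Sum>u\<in>e. int (pos V E x (Inl u)))"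
proof -
  let ?p = "pos V E x"
  have "cost V E x = (\<Sum>e\<in>E. 2 * int (?p (Inr e)) - (\<Sum>u\<in>e. int (?p (Inl u))))"
    unfolding cost_def using assms by (intro sum.cong) (simp_all add: sum_subtractf)
  then show ?thesis by (simp add: sum_subtractf sum_distrib_left)
qed

definition placed_vertices :: "'a set \<Rightarrow> 'a set set \<Rightarrow> (nat \<Rightarrow> 'a + 'a set) \<Rightarrow> nat \<Rightarrow> 'a set" where
  "placed_vertices V E x t = {v \<in> V. pos V E x (Inl v) \<le> t}"

definition placed_edges :: "'a set \<Rightarrow> 'a set set \<Rightarrow> (nat \<Rightarrow> 'a + 'a set) \<Rightarrow> nat \<Rightarrow> 'a set set" where
  "placed_edges V E x t = {e \<in> E. pos V E x (Inr e) \<le> t}"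

lemma placed_edge_subset:
  assumes "simple_graph V E" "c_sequence V E x" "e \<in> placed_edges V E x t"
  shows "e \<subseteq> placed_vertices V E x t"
proof
  fix u assume "u \<in> e"
  moreover have "e \<in> E" "pos V E x (Inr e) \<le> t"
    using assms(3) by (simp_all add: placed_edges_def)
  ultimately have "u \<in> V" "pos V E x (Inl u) < pos V E x (Inr e)"
    using assms(1,2) by (auto simp: simple_graph_def c_sequence_def)
  with \<open>pos V E x (Inr e) \<le> t\<close> show "u \<in> placed_vertices V E x t"
    by (simp add: placed_vertices_def)
qed

lemma card_placed:
  assumes "c_sequence V E x" "t \<le> card V + card E"
  shows "card (placed_vertices V E x t) + card (placed_edges V E x t) = t"
proof -
  let ?p = "pos V E x"
  have bij: "bij_betw ?p (elems V E) {1..card V + card E}" by (rule c_sequence_pos_bij[OF assms(1)])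
  let ?A = "{z \<in> elems V E. ?p z \<le> t}"
  have "?p ` ?A = {k \<in> ?p ` elems V E. k \<le> t}" by blast
  also have "\<dots> = {1..t}"
    using bij assms(2) by (auto simp: bij_betw_def)
  finally have "bij_betw ?p ?A {1..t}"
    using bij by (auto simp: bij_betw_def intro: inj_on_subset)
  then have "card ?A = t" by (simp add: bij_betw_same_card)
  moreover have "?A = placed_vertices V E x t <+> placed_edges V E x t"
    by (auto simp: elems_def placed_vertices_def placed_edges_def)
  moreover have "finite (placed_vertices V E x t)" "finite (placed_edges V E x t)"
    using c_sequence_finite[OF assms(1)] by (simp_all add: placed_vertices_def placed_edges_def)
  ultimately show ?thesis by (simp add: card_Plus)
qed

lemma sum_layer_cake:
  fixes f :: "'b \<Rightarrow> nat"
  assumes "finite A" "\<And>a. a \<in> A \<Longrightarrow> f a \<le> L"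
  shows "int (sum f A) = (\<Sum>t<L. int (card A) - int (card {a \<in> A. f a \<le> t}))"
proof -
  have "int (f a) = (\<Sum>t<L. 1 - of_bool (f a \<le> t))" if "a \<in> A" for a
  proof -
    have "{..<L} \<inter> {t. t < f a} = {..<f a}" using assms(2)[OF that] by auto
    then have "int (f a) = (\<Sum>t<L. of_bool (t < f a))" by simp
    also have "\<dots> = (\<Sum>t<L. 1 - of_bool (f a \<le> t))" by (intro sum.cong) auto
    finally show ?thesis .
  qed
  then have "int (sum f A) = (\<Sum>a\<in>A. \<Sum>t<L. 1 - of_bool (f a \<le> t))"
    by (simp add: of_nat_sum)
  also have "\<dots> = (\<Sum>t<L. \<Sum>a\<in>A. 1 - of_bool (f a \<le> t))"
    by (rule sum.swap)
  also have "\<dots> = (\<Sum>t<L. int (card A) - int (card {a \<in> A. f a \<le> t}))"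
    using assms(1) by (simp add: sum_subtractf Collect_conj_eq Int_commute)
  finally show ?thesis .
qed

lemma Suc_mod_eq_if: "i < n \<Longrightarrow> Suc i mod n = (if i = n - 1 then 0 else Suc i)"
  by (cases "Suc i < n") auto

lemma cycle_V_eq_lessThan: "cycle_V n = {..<n}"
  by (simp add: cycle_V_def atLeast0LessThan)

lemma cycle_E_eq_image: "cycle_E n = (\<lambda>i. {i, Suc i mod n}) ` {..<n}"
  unfolding cycle_E_def by auto

lemma inj_on_cycle_edge:
  assumes "n \<ge> 3"
  shows "inj_on (\<lambda>i. {i, Suc i mod n}) {..<n}"
proof
  fix i j assume "i \<in> {..<n}" "j \<in> {..<n}" "{i, Suc i mod n} = {j, Suc j mod n}"
  with assms show "i = j"
    by (auto simp: Suc_mod_eq_if doubleton_eq_iff split: if_splits)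
qed

lemma card_cycle_E: "n \<ge> 3 \<Longrightarrow> card (cycle_E n) = n"
  by (simp add: cycle_E_eq_image card_image inj_on_cycle_edge)

lemma card_cycle_V_add_card_cycle_E: "n \<ge> 3 \<Longrightarrow> card (cycle_V n) + card (cycle_E n) = 2 * n"
  by (simp add: card_cycle_E cycle_V_eq_lessThan)

lemma sum_cycle_E:
  "n \<ge> 3 \<Longrightarrow> (\<Sum>e\<in>cycle_E n. g e) = (\<Sum>i<n. g {i, Suc i mod n})"
  by (simp add: cycle_E_eq_image sum.reindex inj_on_cycle_edge)

lemma simple_graph_cycle: "n \<ge> 3 \<Longrightarrow> simple_graph (cycle_V n) (cycle_E n)"
  by (auto simp: simple_graph_def cycle_V_eq_lessThan cycle_E_eq_image Suc_mod_eq_if)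

lemma sum_lessThan_Suc_mod: "(\<Sum>i<n. g (Suc i mod n)) = (\<Sum>i<n. g i)"
proof (cases n)
  case (Suc m)
  have "(\<Sum>i<Suc m. g (Suc i mod Suc m)) = (\<Sum>i<m. g (Suc i mod Suc m)) + g 0"
    by simp
  also have "(\<Sum>i<m. g (Suc i mod Suc m)) = (\<Sum>i<m. g (Suc i))"
    by (intro sum.cong) auto
  also have "(\<Sum>i<m. g (Suc i)) + g 0 = (\<Sum>i<Suc m. g i)"
    by (simp only: sum.lessThan_Suc_shift add.commute)
  finally show ?thesis using Suc by simp
qed simp

lemma sum_cycle_E_endpoints:
  fixes g :: "nat \<Rightarrow> 'b::comm_monoid_add"
  assumes "n \<ge> 3"
  shows "(\<Sum>e\<in>cycle_E n. \<Sum>u\<in>e. g u) = (\<Sum>i<n. g i) + (\<Sum>i<n. g i)"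
proof -
  have "(\<Sum>e\<in>cycle_E n. \<Sum>u\<in>e. g u) = (\<Sum>i<n. g i + g (Suc i mod n))"
    using assms by (simp add: sum_cycle_E Suc_mod_eq_if)
  then show ?thesis by (simp add: sum.distrib sum_lessThan_Suc_mod)
qed

lemma succ_closed_eq_lessThan:
  assumes "S \<subseteq> {..<n}" "a \<in> S" "\<And>i. i \<in> S \<Longrightarrow> Suc i mod n \<in> S"
  shows "S = {..<n}"
proof -
  have a: "a < n" using assms(1,2) by auto
  have reach: "(a + k) mod n \<in> S" for k
  proof (induction k)
    case 0
    then show ?case using assms(2) a by simp
  next
    case (Suc k)
    then show ?case using assms(3)[OF Suc.IH] by (simp add: mod_Suc_eq)
  qed
  have "j \<in> S" if "j < n" for j
    using reach[of "n - a + j"] a that by simp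
  then show ?thesis using assms(1) by auto
qed

lemma card_cycle_edges_within_less:
  assumes "S \<subseteq> {..<n}" "S \<noteq> {}" "S \<noteq> {..<n}"
  shows "card {e \<in> cycle_E n. e \<subseteq> S} < card S"
proof -
  let ?I = "{i \<in> S. Suc i mod n \<in> S}"
  have fin: "finite S" using assms(1) finite_subset by blast
  have "{e \<in> cycle_E n. e \<subseteq> S} \<subseteq> (\<lambda>i. {i, Suc i mod n}) ` ?I"
    by (auto simp: cycle_E_eq_image)
  then have "card {e \<in> cycle_E n. e \<subseteq> S} \<le> card ((\<lambda>i. {i, Suc i mod n}) ` ?I)"
    using fin by (intro card_mono) simp_all
  also have "\<dots> \<le> card ?I"
    using fin by (intro card_image_le) simp
  also have "card ?I < card S"
  proof (rule psubset_card_mono[OF fin])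
    have "?I \<noteq> S"
      using succ_closed_eq_lessThan[OF assms(1)] assms(2,3) by blast
    then show "?I \<subset> S" by blast
  qed
  finally show ?thesis .
qed

lemma cycle_placed_edges_less:
  assumes "n \<ge> 3" "c_sequence (cycle_V n) (cycle_E n) x" "0 < t" "t < 2 * n"
  shows "card (placed_edges (cycle_V n) (cycle_E n) x t)
           < card (placed_vertices (cycle_V n) (cycle_E n) x t)"
proof -
  let ?S = "placed_vertices (cycle_V n) (cycle_E n) x t"
  let ?P = "placed_edges (cycle_V n) (cycle_E n) x t"
  have count: "card ?S + card ?P = t"
    using card_placed[OF assms(2)] card_cycle_V_add_card_cycle_E[OF assms(1)] assms(4) by simp
  have S: "?S \<subseteq> {..<n}" by (auto simp: placed_vertices_def cycle_V_eq_lessThan)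
  have "?P \<subseteq> {e \<in> cycle_E n. e \<subseteq> ?S}"
    using placed_edge_subset[OF simple_graph_cycle[OF assms(1)] assms(2)]
    by (auto simp: placed_edges_def)
  then have P: "card ?P \<le> card {e \<in> cycle_E n. e \<subseteq> ?S}"
    by (intro card_mono) (simp_all add: cycle_E_eq_image)
  consider "?S = {}" | "?S = {..<n}" | "?S \<noteq> {}" "?S \<noteq> {..<n}" by blast
  then show ?thesis
  proof cases
    case 1
    then have "{e \<in> cycle_E n. e \<subseteq> ?S} = {}" by (auto simp: cycle_E_eq_image)
    then have "card ?P = 0" using P by (metis card.empty le_zero_eq)
    then show ?thesis using count 1 assms(3) by simp
  next
    case 2
    then show ?thesis using count assms(4) by simp
  next
    case 3
    then show ?thesis using card_cycle_edges_within_less[OF S] P by (meson le_less_trans)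
  qed
qed

lemma cycle_surplus_lower_bound:
  assumes "n \<ge> 3" "c_sequence (cycle_V n) (cycle_E n) x" "t < 2 * n"
  shows "(if t = 0 then 0 else if even t then 2 else 1)
           \<le> int (card (placed_vertices (cycle_V n) (cycle_E n) x t))
             - int (card (placed_edges (cycle_V n) (cycle_E n) x t))"
proof -
  have "card (placed_vertices (cycle_V n) (cycle_E n) x t)
          + card (placed_edges (cycle_V n) (cycle_E n) x t) = t"
    using card_placed[OF assms(2)] card_cycle_V_add_card_cycle_E[OF assms(1)] assms(3) by simp
  moreover have "0 < t \<Longrightarrow> card (placed_edges (cycle_V n) (cycle_E n) x t)
                               < card (placed_vertices (cycle_V n) (cycle_E n) x t)"
    using cycle_placed_edges_less[OF assms(1,2)] assms(3) by blast
  ultimately show ?thesis \<comment> \<open>a_t - b_t = t - 2 b_t has the parity of t\<close>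
    by presburger
qed

lemma sum_parity_weights:
  "(\<Sum>t<2 * Suc m. if t = 0 then 0 else if even t then 2 else 1 :: int) = 3 * int (Suc m) - 2"
proof (induction m)
  case (Suc m)
  have "2 * Suc (Suc m) = Suc (Suc (2 * Suc m))" by simp
  then show ?case using Suc.IH by simp
qed (simp add: numeral_2_eq_2)

lemma cost_cycle_eq_sum_surplus:
  assumes "n \<ge> 3" "c_sequence (cycle_V n) (cycle_E n) x"
  shows "cost (cycle_V n) (cycle_E n) x = 2 * (\<Sum>t<2 * n.
           int (card (placed_vertices (cycle_V n) (cycle_E n) x t))
           - int (card (placed_edges (cycle_V n) (cycle_E n) x t)))"
proof -
  let ?V = "cycle_V n" and ?E = "cycle_E n"
  let ?p = "pos ?V ?E x"
  have le: "?p z \<le> 2 * n" if "z \<in> elems ?V ?E" for z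
    using c_sequence_pos_le[OF assms(2) that] card_cycle_V_add_card_cycle_E[OF assms(1)] by simp
  have "int (\<Sum>e\<in>?E. ?p (Inr e))
          = (\<Sum>t<2 * n. int (card ?E) - int (card {e \<in> ?E. ?p (Inr e) \<le> t}))"
    using le by (intro sum_layer_cake) (auto simp: cycle_E_eq_image elems_def)
  then have E: "(\<Sum>e\<in>?E. int (?p (Inr e)))
                  = (\<Sum>t<2 * n. int n - int (card (placed_edges ?V ?E x t)))"
    using assms(1) by (simp add: card_cycle_E placed_edges_def)
  have "int (\<Sum>v\<in>?V. ?p (Inl v))
          = (\<Sum>t<2 * n. int (card ?V) - int (card {v \<in> ?V. ?p (Inl v) \<le> t}))"
    using le by (intro sum_layer_cake) (auto simp: cycle_V_eq_lessThan elems_def)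
  then have V: "(\<Sum>v\<in>?V. int (?p (Inl v)))
                  = (\<Sum>t<2 * n. int n - int (card (placed_vertices ?V ?E x t)))"
    by (simp add: cycle_V_eq_lessThan placed_vertices_def)
  have "cost ?V ?E x = 2 * (\<Sum>e\<in>?E. int (?p (Inr e))) - 2 * (\<Sum>v\<in>?V. int (?p (Inl v)))"
    using cost_eq_sum_edges_minus_sum_endpoints[of ?E ?V x] simple_graph_cycle[OF assms(1)]
      sum_cycle_E_endpoints[OF assms(1), of "\<lambda>u. int (?p (Inl u))"]
    by (simp add: simple_graph_def cycle_V_eq_lessThan)
  then show ?thesis unfolding E V by (simp add: sum_subtractf)
qed

lemma cost_cycle_ge:
  assumes "n \<ge> 3" "c_sequence (cycle_V n) (cycle_E n) x"
  shows "6 * int n - 4 \<le> cost (cycle_V n) (cycle_E n) x"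
proof -
  obtain m where n: "n = Suc m" using assms(1) by (cases n) auto
  have "(\<Sum>t<2 * n. if t = 0 then 0 else if even t then 2 else 1)
          \<le> (\<Sum>t<2 * n. int (card (placed_vertices (cycle_V n) (cycle_E n) x t))
                         - int (card (placed_edges (cycle_V n) (cycle_E n) x t)))"
    using cycle_surplus_lower_bound[OF assms] by (intro sum_mono) simp
  then show ?thesis
    unfolding cost_cycle_eq_sum_surplus[OF assms] using sum_parity_weights[of m] n by simp
qed

(* Vertex 0 at time 1; for 0 < i < n, vertex i at time 2i and edge {i-1, i} at time 2i + 1;
   the closing edge {n-1, 0} at time 2n. *)
definition cycle_seq :: "nat \<Rightarrow> nat \<Rightarrow> nat + nat set" where
  "cycle_seq n t =
     (if t = 1 then Inl 0 else if t = 2 * n then Inr {n - 1, 0}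
      else if even t then Inl (t div 2) else Inr {t div 2 - 1, t div 2})"

lemma cycle_seq_range:
  assumes "n \<ge> 3" "t \<in> {1..2 * n}"
  shows "cycle_seq n t \<in> elems (cycle_V n) (cycle_E n)"
proof (cases "t = 1 \<or> t = 2 * n \<or> even t")
  case True
  have "{n - 1, 0} \<in> cycle_E n"
    using assms(1) by (auto simp: cycle_E_eq_image intro!: image_eqI[of _ _ "n - 1"])
  with True assms show ?thesis
    by (auto simp: cycle_seq_def elems_def cycle_V_eq_lessThan)
next
  case False
  then have "t div 2 - 1 < n" "Suc (t div 2 - 1) = t div 2" "t div 2 < n"
    using assms(2) by auto
  then have "{t div 2 - 1, t div 2} \<in> cycle_E n"
    unfolding cycle_E_eq_image by (metis (no_types, lifting) image_eqI lessThan_iff mod_less)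
  with False show ?thesis
    by (auto simp: cycle_seq_def elems_def)
qed

lemma inj_on_cycle_seq: "n \<ge> 3 \<Longrightarrow> inj_on (cycle_seq n) {1..2 * n}"
  unfolding inj_on_def cycle_seq_def
  by (auto simp: doubleton_eq_iff split: if_splits elim!: evenE oddE)

lemma bij_betw_cycle_seq:
  assumes "n \<ge> 3"
  shows "bij_betw (cycle_seq n) {1..card (cycle_V n) + card (cycle_E n)} (elems (cycle_V n) (cycle_E n))"
proof -
  note len = card_cycle_V_add_card_cycle_E[OF assms]
  have fin: "finite (elems (cycle_V n) (cycle_E n))"
    by (simp add: elems_def cycle_V_eq_lessThan cycle_E_eq_image)
  have "card (cycle_seq n ` {1..2 * n}) = card (elems (cycle_V n) (cycle_E n))"
    using len fin card_image[OF inj_on_cycle_seq[OF assms]] by (simp add: elems_def card_Plus)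
  then have "cycle_seq n ` {1..2 * n} = elems (cycle_V n) (cycle_E n)"
    using cycle_seq_range[OF assms] by (intro card_subset_eq[OF fin]) auto
  then show ?thesis
    using inj_on_cycle_seq[OF assms] len by (simp add: bij_betw_def)
qed

lemma pos_cycle_seq:
  assumes "n \<ge> 3" "t \<in> {1..2 * n}"
  shows "pos (cycle_V n) (cycle_E n) (cycle_seq n) (cycle_seq n t) = t"
  unfolding pos_def card_cycle_V_add_card_cycle_E[OF assms(1)]
  using inv_into_f_f[OF inj_on_cycle_seq[OF assms(1)] assms(2)] .

lemma pos_cycle_seq_vertex:
  assumes "n \<ge> 3" "v < n"
  shows "pos (cycle_V n) (cycle_E n) (cycle_seq n) (Inl v) = (if v = 0 then 1 else 2 * v)"
proof -
  have "Inl v = cycle_seq n (if v = 0 then 1 else 2 * v)"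
    using assms by (simp add: cycle_seq_def)
  then show ?thesis using pos_cycle_seq assms by auto
qed

lemma pos_cycle_seq_edge:
  assumes "n \<ge> 3" "i < n"
  shows "pos (cycle_V n) (cycle_E n) (cycle_seq n) (Inr {i, Suc i mod n})
           = (if i = n - 1 then 2 * n else 2 * i + 3)"
proof -
  have "Inr {i, Suc i mod n} = cycle_seq n (if i = n - 1 then 2 * n else 2 * i + 3)"
    using assms by (auto simp: cycle_seq_def Suc_mod_eq_if insert_commute)
  then show ?thesis using pos_cycle_seq assms by auto
qed

lemma c_sequence_cycle_seq:
  assumes "n \<ge> 3"
  shows "c_sequence (cycle_V n) (cycle_E n) (cycle_seq n)"
  unfolding c_sequence_def
proof (intro conjI bij_betw_cycle_seq[OF assms] ballI)
  fix e u assume "e \<in> cycle_E n" "u \<in> e"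
  then obtain i where i: "i < n" "e = {i, Suc i mod n}" by (auto simp: cycle_E_eq_image)
  with \<open>u \<in> e\<close> have "u = i \<or> u = (if i = n - 1 then 0 else Suc i)" "u < n"
    by (auto simp: Suc_mod_eq_if)
  then show "pos (cycle_V n) (cycle_E n) (cycle_seq n) (Inl u)
               < pos (cycle_V n) (cycle_E n) (cycle_seq n) (Inr e)"
    unfolding i(2) pos_cycle_seq_edge[OF assms i(1)] pos_cycle_seq_vertex[OF assms \<open>u < n\<close>]
    by auto
qed

lemma cost_cycle_seq:
  assumes "n \<ge> 3"
  shows "cost (cycle_V n) (cycle_E n) (cycle_seq n) = 6 * int n - 4"
proof -
  let ?p = "pos (cycle_V n) (cycle_E n) (cycle_seq n)"
  have "cost (cycle_V n) (cycle_E n) (cycle_seq n)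
          = 2 * (\<Sum>i<n. int (?p (Inr {i, Suc i mod n})) - int (?p (Inl i)))"
    using cost_eq_sum_edges_minus_sum_endpoints[of "cycle_E n" "cycle_V n" "cycle_seq n"]
      simple_graph_cycle[OF assms] sum_cycle_E_endpoints[OF assms, of "\<lambda>u. int (?p (Inl u))"]
    by (simp add: simple_graph_def sum_cycle_E[OF assms] sum_subtractf)
  also have "\<dots> = 2 * (\<Sum>i<n. 3 - of_bool (i = 0) - of_bool (i = n - 1))"
    using assms by (intro arg_cong[where f = "(*) 2"] sum.cong)
      (auto simp: pos_cycle_seq_edge pos_cycle_seq_vertex)
  also have "\<dots> = 6 * int n - 4"
    using assms by (simp add: sum_subtractf)
  finally show ?thesis .
qed

theorem theorem10:
  fixes n :: nat
  assumes "n \<ge> 3"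
  shows "nu_star (cycle_V n) (cycle_E n) = 6 * int n - 4"
  using cost_cycle_ge[OF assms] c_sequence_cycle_seq[OF assms] cost_cycle_seq[OF assms]
  by (rule nu_star_eqI)

end
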